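(* Let $X$ be a finite subset of $\mathbb Z$ with at least four elements, let $P$ be a linked pair partition of $X$, and let $p\in P$. Then there exists $q\in P$ with $q\neq p$ such that $P\setminus\{q\}$ is a linked pair partition of $X\setminus q$.
   Context: A pair of a finite set $X$ is a two-element subset; a pair partition of $X$ is a partition of $X$ into pairs. Two distinct pairs $p_1,p_2$ of a pair partition of $X\subset\mathbb Z$ are called linked if $p_1\cap[\min p_2,\max p_2]\neq\emptyset$ and $p_2\cap[\min p_1,\max p_1]\neq\emptyset$. A linked path in $P$ from $p$ to $p'$ is a map $\gamma:\{0,\dots,l\}\to P$ with $\gamma(0)=p$, $\gamma(l)=p'$ and $\gamma(i),\gamma(i+1)$ linked for all $i<l$. $P$ is called linked if for any two elements $p_1,p_2\in P$ there is a linked path in $P$ from $p_1$ to $p_2$. *)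

theory Defs
  imports Main
begin

definition is_pair :: "'a set \<Rightarrow> bool" where
  "is_pair p \<longleftrightarrow> card p = 2"

definition pair_partition :: "'a set set \<Rightarrow> 'a set \<Rightarrow> bool" where
  "pair_partition P X \<longleftrightarrow>
     (\<forall>p\<in>P. is_pair p) \<and> \<Union>P = X \<and>
     (\<forall>p\<in>P. \<forall>q\<in>P. p \<noteq> q \<longrightarrow> p \<inter> q = {})"

definition linked_pairs :: "int set \<Rightarrow> int set \<Rightarrow> bool" where
  "linked_pairs p1 p2 \<longleftrightarrow> p1 \<noteq> p2 \<and>
     p1 \<inter> {Min p2..Max p2} \<noteq> {} \<and> p2 \<inter> {Min p1..Max p1} \<noteq> {}"

definition linked_path :: "int set set \<Rightarrow> int set \<Rightarrow> int set \<Rightarrow> nat \<Rightarrow> (nat \<Rightarrow> int set) \<Rightarrow> bool" where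
  "linked_path P p p' l \<gamma> \<longleftrightarrow>
     (\<forall>i\<le>l. \<gamma> i \<in> P) \<and> \<gamma> 0 = p \<and> \<gamma> l = p' \<and>
     (\<forall>i<l. linked_pairs (\<gamma> i) (\<gamma> (Suc i)))"

definition linked :: "int set set \<Rightarrow> bool" where
  "linked P \<longleftrightarrow> (\<forall>p1\<in>P. \<forall>p2\<in>P. \<exists>l \<gamma>. linked_path P p1 p2 l \<gamma>)"

end

theory Submission
  imports Defs
begin

text \<open>Linkedness of \<open>P\<close> is connectedness of the graph on \<open>P\<close> whose edges are the linked
pairs. In a finite connected graph a vertex \<open>q\<close> at maximal distance from \<open>p\<close> is not a cut
vertex: every other vertex \<open>w\<close> has a shortest path from \<open>p\<close>, all of whose inner vertices are
strictly closer to \<open>p\<close> than \<open>w\<close>, hence different from \<open>q\<close>. The hypothesis on \<open>card X\<close> only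
guarantees that \<open>P\<close> has a vertex besides \<open>p\<close>.\<close>

definition rel_dist :: "'a rel \<Rightarrow> 'a \<Rightarrow> 'a \<Rightarrow> nat" where
  "rel_dist E a b = (LEAST n. (a, b) \<in> E ^^ n)"

lemma relpow_rel_dist:
  assumes "(a, b) \<in> E\<^sup>*"
  shows "(a, b) \<in> E ^^ rel_dist E a b"
proof -
  obtain n where "(a, b) \<in> E ^^ n" using assms rtrancl_power by blast
  then show ?thesis unfolding rel_dist_def by (rule LeastI)
qed

lemma rel_dist_le: "(a, b) \<in> E ^^ n \<Longrightarrow> rel_dist E a b \<le> n"
  unfolding rel_dist_def by (rule Least_le)

lemma rel_dist_eq_0_iff:
  assumes "(a, b) \<in> E\<^sup>*"
  shows "rel_dist E a b = 0 \<longleftrightarrow> a = b"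
proof
  show "a = b" if "rel_dist E a b = 0"
    using relpow_rel_dist[OF assms] that by simp
  show "rel_dist E a b = 0" if "a = b"
    using rel_dist_le[of a b 0 E] that by simp
qed

lemma rel_dist_Suc_predecessor:
  assumes "(a, b) \<in> E\<^sup>*" and "rel_dist E a b = Suc n"
  obtains u where "(a, u) \<in> E\<^sup>*" "(u, b) \<in> E" "rel_dist E a u = n"
proof -
  have "(a, b) \<in> E ^^ Suc n"
    using relpow_rel_dist[OF assms(1)] assms(2) by simp
  then obtain u where u: "(a, u) \<in> E ^^ n" "(u, b) \<in> E"
    by (rule relpow_Suc_E)
  have "(a, u) \<in> E\<^sup>*" using u(1) by (rule relpow_imp_rtrancl)
  have "(a, b) \<in> E ^^ Suc (rel_dist E a u)"
    using relpow_rel_dist[OF \<open>(a, u) \<in> E\<^sup>*\<close>] u(2) by (rule relpow_Suc_I)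
  then have "Suc n \<le> Suc (rel_dist E a u)"
    unfolding assms(2)[symmetric] by (rule rel_dist_le)
  moreover have "rel_dist E a u \<le> n" using u(1) by (rule rel_dist_le)
  ultimately show ?thesis using that \<open>(a, u) \<in> E\<^sup>*\<close> u(2) by simp
qed

lemma rtrancl_Restr_avoiding_farthest:
  assumes "E \<subseteq> V \<times> V"
    and farthest: "\<And>u. (a, u) \<in> E\<^sup>* \<Longrightarrow> rel_dist E a u \<le> rel_dist E a q"
    and "(a, b) \<in> E\<^sup>*" and "b \<noteq> q"
  shows "(a, b) \<in> (Restr E (V - {q}))\<^sup>*"
  using assms(3,4)
proof (induction "rel_dist E a b" arbitrary: b)
  case 0
  then have "a = b" using rel_dist_eq_0_iff by metis
  then show ?case by simp
next
  case (Suc n)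
  obtain u where u: "(a, u) \<in> E\<^sup>*" "(u, b) \<in> E" "rel_dist E a u = n"
    using rel_dist_Suc_predecessor[OF Suc.prems(1) Suc.hyps(2)[symmetric]] .
  have "u \<noteq> q"
    using farthest[OF Suc.prems(1)] Suc.hyps(2) u(3) by auto
  have "(a, u) \<in> (Restr E (V - {q}))\<^sup>*"
    using Suc.hyps(1)[OF u(3)[symmetric] u(1) \<open>u \<noteq> q\<close>] .
  moreover have "(u, b) \<in> Restr E (V - {q})"
    using u(2) \<open>u \<noteq> q\<close> Suc.prems(2) subsetD[OF assms(1) u(2)] by simp
  ultimately show ?case by (rule rtrancl_into_rtrancl)
qed

lemma obtain_non_cut_vertex:
  assumes "finite V" and "E \<subseteq> V \<times> V" and "sym E"
    and connected: "\<forall>x\<in>V. \<forall>y\<in>V. (x, y) \<in> E\<^sup>*"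
    and "a \<in> V" and "v \<in> V" and "v \<noteq> a"
  obtains q where "q \<in> V" "q \<noteq> a"
    "\<forall>x\<in>V - {q}. \<forall>y\<in>V - {q}. (x, y) \<in> (Restr E (V - {q}))\<^sup>*"
proof -
  obtain q where q: "q \<in> V" and "Max (rel_dist E a ` V) = rel_dist E a q"
    using obtains_MAX \<open>finite V\<close> \<open>a \<in> V\<close> by blast
  then have q_max: "rel_dist E a u \<le> rel_dist E a q" if "u \<in> V" for u
    using Max_ge[OF finite_imageI[OF \<open>finite V\<close>] imageI[OF that, where f = "rel_dist E a"]]
    by simp
  have "0 < rel_dist E a v"
    using rel_dist_eq_0_iff[of a v E] connected \<open>a \<in> V\<close> \<open>v \<in> V\<close> \<open>v \<noteq> a\<close> by simp
  then have "q \<noteq> a"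
    using q_max[OF \<open>v \<in> V\<close>] rel_dist_le[of a a 0 E] by auto
  have reach_V: "u \<in> V" if "(a, u) \<in> E\<^sup>*" for u
    using that \<open>a \<in> V\<close> assms(2) by (induction rule: rtrancl_induct) auto
  let ?E = "Restr E (V - {q})"
  have from_a: "(a, y) \<in> ?E\<^sup>*" if "y \<in> V - {q}" for y
  proof (rule rtrancl_Restr_avoiding_farthest[OF assms(2)])
    show "rel_dist E a u \<le> rel_dist E a q" if "(a, u) \<in> E\<^sup>*" for u
      using q_max reach_V that by blast
    show "(a, y) \<in> E\<^sup>*" using connected \<open>a \<in> V\<close> that by blast
  qed (use that in blast)
  have "sym (?E\<^sup>*)"
    using \<open>sym E\<close> by (intro sym_rtrancl) (auto simp: sym_def)
  have "\<forall>x\<in>V - {q}. \<forall>y\<in>V - {q}. (x, y) \<in> ?E\<^sup>*"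
  proof (intro ballI)
    fix x y assume "x \<in> V - {q}" "y \<in> V - {q}"
    then have "(x, a) \<in> ?E\<^sup>*" and "(a, y) \<in> ?E\<^sup>*"
      using symD[OF \<open>sym (?E\<^sup>*)\<close> from_a[of x]] from_a[of y] by simp_all
    then show "(x, y) \<in> ?E\<^sup>*" by (rule rtrancl_trans)
  qed
  with q \<open>q \<noteq> a\<close> show ?thesis by (rule that)
qed

definition link_rel :: "int set set \<Rightarrow> int set rel" where
  "link_rel P = {(a, b). a \<in> P \<and> b \<in> P \<and> linked_pairs a b}"

lemma link_rel_subset: "link_rel P \<subseteq> P \<times> P"
  unfolding link_rel_def by auto

lemma sym_link_rel: "sym (link_rel P)"
  unfolding sym_def link_rel_def linked_pairs_def by auto

lemma link_rel_Diff: "link_rel (P - {q}) = Restr (link_rel P) (P - {q})"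
  unfolding link_rel_def by auto

lemma linked_path_imp_rtrancl:
  "linked_path P a b l \<gamma> \<Longrightarrow> (a, b) \<in> (link_rel P)\<^sup>*"
proof (induction l arbitrary: b)
  case 0
  then show ?case by (auto simp: linked_path_def)
next
  case (Suc l)
  then have "(a, \<gamma> l) \<in> (link_rel P)\<^sup>*"
    by (auto simp: linked_path_def)
  moreover have "(\<gamma> l, b) \<in> link_rel P"
    using Suc.prems by (auto simp: linked_path_def link_rel_def)
  ultimately show ?case by (rule rtrancl_into_rtrancl)
qed

lemma rtrancl_imp_linked_path:
  assumes "(a, b) \<in> (link_rel P)\<^sup>*" and "a \<in> P"
  shows "\<exists>l \<gamma>. linked_path P a b l \<gamma>"
  using assms(1)
proof (induction rule: rtrancl_induct)
  case base
  have "linked_path P a a 0 (\<lambda>_. a)" using assms(2) by (simp add: linked_path_def)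
  then show ?case by blast
next
  case (step y z)
  then obtain l \<gamma> where "linked_path P a y l \<gamma>" by blast
  then have "linked_path P a z (Suc l) (\<gamma>(Suc l := z))"
    using step(2) unfolding linked_path_def link_rel_def
    by (auto simp: less_Suc_eq le_Suc_eq)
  then show ?case by blast
qed

lemma linked_iff_rtrancl: "linked P \<longleftrightarrow> (\<forall>a\<in>P. \<forall>b\<in>P. (a, b) \<in> (link_rel P)\<^sup>*)"
  unfolding linked_def using linked_path_imp_rtrancl rtrancl_imp_linked_path by blast

lemma pair_partition_Diff:
  assumes "pair_partition P X" and "q \<in> P"
  shows "pair_partition (P - {q}) (X - q)"
proof -
  have pairs: "\<forall>p\<in>P. is_pair p" and "\<Union>P = X"
    and disjoint: "\<forall>p\<in>P. \<forall>p'\<in>P. p \<noteq> p' \<longrightarrow> p \<inter> p' = {}"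
    using assms(1) unfolding pair_partition_def by simp_all
  have "\<Union>(P - {q}) = X - q"
  proof
    show "\<Union>(P - {q}) \<subseteq> X - q"
    proof
      fix x assume "x \<in> \<Union>(P - {q})"
      then obtain p where "p \<in> P" "p \<noteq> q" "x \<in> p" by blast
      moreover have "p \<inter> q = {}" using disjoint \<open>p \<in> P\<close> \<open>q \<in> P\<close> \<open>p \<noteq> q\<close> by blast
      ultimately show "x \<in> X - q" using \<open>\<Union>P = X\<close> by blast
    qed
    show "X - q \<subseteq> \<Union>(P - {q})"
      using \<open>\<Union>P = X\<close> by blast
  qed
  then show ?thesis
    using pairs disjoint unfolding pair_partition_def by simp
qed

lemma pair_partition_exists_other:
  assumes "pair_partition P X" and "card X \<ge> 4" and "p \<in> P"
  obtains v where "v \<in> P" "v \<noteq> p"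
proof -
  have "P \<noteq> {p}"
  proof
    assume "P = {p}"
    then have "card X = 2"
      using assms(1) by (auto simp: pair_partition_def is_pair_def)
    then show False using assms(2) by simp
  qed
  then show ?thesis using that assms(3) by blast
qed

theorem mainTheorem7:
  fixes X :: "int set" and P :: "int set set" and p :: "int set"
  assumes "finite X" and "card X \<ge> 4"
    and "pair_partition P X" and "linked P" and "p \<in> P"
  shows "\<exists>q\<in>P. q \<noteq> p \<and> pair_partition (P - {q}) (X - q) \<and> linked (P - {q})"
proof -
  have "finite P"
    using assms(1,3) finite_UnionD by (auto simp: pair_partition_def)
  have "\<forall>a\<in>P. \<forall>b\<in>P. (a, b) \<in> (link_rel P)\<^sup>*"
    using assms(4) unfolding linked_iff_rtrancl .
  moreover obtain v where "v \<in> P" "v \<noteq> p"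
    using assms(3,2,5) by (rule pair_partition_exists_other)
  ultimately obtain q where "q \<in> P" "q \<noteq> p"
    and connected: "\<forall>a\<in>P - {q}. \<forall>b\<in>P - {q}. (a, b) \<in> (Restr (link_rel P) (P - {q}))\<^sup>*"
    using obtain_non_cut_vertex[OF \<open>finite P\<close> link_rel_subset sym_link_rel _ assms(5)]
    by blast
  have "linked (P - {q})"
    unfolding linked_iff_rtrancl link_rel_Diff by (rule connected)
  moreover have "pair_partition (P - {q}) (X - q)"
    using assms(3) \<open>q \<in> P\<close> by (rule pair_partition_Diff)
  ultimately show ?thesis using \<open>q \<in> P\<close> \<open>q \<noteq> p\<close> by blast
qed

end
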